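(* Let $M\ge4$ be even and $1<\alpha\le2$. Let $\tau(T_2)=I\otimes\tau(T_1)+\tau(T_1)\otimes I\in\mathbb{R}^{M^2\times M^2}$. Then every eigenvalue $\lambda_{\tau(T_2)}$ of $\tau(T_2)$ satisfies $$\frac{4\Delta t\,\theta}{(\mathrm{b}-\mathrm{a})^{\alpha}}<\lambda_{\tau(T_2)}<\frac{4\Delta t}{h^{\alpha}}\left[\frac{\Gamma(\alpha+1)}{\Gamma(\alpha/2+1)^2}-\frac{\theta h^{\alpha}}{(\mathrm{b}-\mathrm{a})^{\alpha}}\right]-\frac{2c_2\Delta t}{h^{\alpha}}.$$
   Context: Let $\mathrm{a}<\mathrm{b}$, $h=(\mathrm{b}-\mathrm{a})/(M+1)$, $\Delta t>0$, $\mu=\Delta t/h^{\alpha}$. For $k\in\mathbb{Z}$ let $c_k=\frac{(-1)^k\Gamma(\alpha+1)}{\Gamma(\alpha/2-k+1)\Gamma(\alpha/2+k+1)}$. Let $T_1=\mu T_0\in\mathbb{R}^{M\times M}$ where $T_0$ is the symmetric Toeplitz matrix with entries $[T_0]_{i,j}=c_{i-j}$. Define $\tau(T_1)=T_1-\mathrm{HC}(T_1)$, where $\mathrm{HC}(T_1)=\mu H$ and $H\in\mathbb{R}^{M\times M}$ is the Hankel matrix with $H_{i,j}=c_{i+j}$ if $i+j\le M-1$, $H_{i,j}=0$ if $i+j\in\{M,M+1,M+2\}$, and $H_{i,j}=c_{2M+2-i-j}$ if $i+j\ge M+3$ (first row $[c_2,\dots,c_{M-1},0,0]$, last row $[0,0,c_{M-1},\dots,c_2]$).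 The constant $\theta$ is $$\theta=\frac{\left(1-\frac{1+\alpha}{5+\alpha/2}\right)^{5+\frac{\alpha}{2}}e^{1+\alpha}\Gamma(\alpha+1)\sin\left(\frac{\pi\alpha}{2}\right)}{\pi\alpha}.$$ $I$ is the $M\times M$ identity and $\otimes$ the Kronecker product. *)

theory Defs
  imports "HOL-Analysis.Analysis" "Jordan_Normal_Form.Char_Poly"
begin

text \<open>Coefficients c_k (fractional centred difference weights). The reciprocal Gamma
  function rGamma is used, so that 1/Gamma at poles is 0, as intended.\<close>
definition frac_coeff :: "real \<Rightarrow> int \<Rightarrow> real" where
  "frac_coeff \<alpha> k = (-1) powi k * Gamma (\<alpha> + 1)
      * rGamma (\<alpha>/2 - of_int k + 1) * rGamma (\<alpha>/2 + of_int k + 1)"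

definition kron :: "'a::times mat \<Rightarrow> 'a mat \<Rightarrow> 'a mat" where
  "kron A B = mat (dim_row A * dim_row B) (dim_col A * dim_col B)
     (\<lambda>(i,j). A $$ (i div dim_row B, j div dim_col B) * B $$ (i mod dim_row B, j mod dim_col B))"

text \<open>T_0: symmetric Toeplitz matrix, entries c_{i-j} (0-based indices; differences
  are index-shift invariant).\<close>
definition T0 :: "real \<Rightarrow> nat \<Rightarrow> real mat" where
  "T0 \<alpha> M = mat M M (\<lambda>(i,j). frac_coeff \<alpha> (int i - int j))"

text \<open>Hankel correction H. Paper indices i,j are 1-based, so with 0-based i,j the
  paper's i+j equals i+j+2.\<close>
definition Hank :: "real \<Rightarrow> nat \<Rightarrow> real mat" where
  "Hank \<alpha> M = mat M M (\<lambda>(i,j).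
     let s = int i + int j + 2 in
     if s \<le> int M - 1 then frac_coeff \<alpha> s
     else if s \<le> int M + 2 then 0
     else frac_coeff \<alpha> (2 * int M + 2 - s))"

definition tauT1 :: "real \<Rightarrow> real \<Rightarrow> nat \<Rightarrow> real mat" where
  "tauT1 \<mu> \<alpha> M = \<mu> \<cdot>\<^sub>m T0 \<alpha> M - \<mu> \<cdot>\<^sub>m Hank \<alpha> M"

definition tauT2 :: "real \<Rightarrow> real \<Rightarrow> nat \<Rightarrow> real mat" where
  "tauT2 \<mu> \<alpha> M = kron (1\<^sub>m M) (tauT1 \<mu> \<alpha> M) + kron (tauT1 \<mu> \<alpha> M) (1\<^sub>m M)"

definition theta_const :: "real \<Rightarrow> real" where
  "theta_const \<alpha> = (1 - (1 + \<alpha>) / (5 + \<alpha>/2)) powr (5 + \<alpha>/2) * exp (1 + \<alpha>)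
     * Gamma (\<alpha> + 1) * sin (pi * \<alpha> / 2) / (pi * \<alpha>)"

end

theory Submission
  imports Defs
begin

(* Write tau(T_1) = mu A with A = T_0 - H.  For 0 < alpha <= 2 the coefficients c_k are negative
   for k >= 1 and increase towards 0, and the partial sums satisfy c_0 + 2 (c_1 + ... + c_n) = 2 P n
   with P n = c_n (alpha/2 - n) / alpha positive and decreasing.  Hence A is symmetric with
   nonpositive off-diagonal entries and negative superdiagonal, its row sums are at least
   2 P (M - 1), strictly so in the first row, and expanding sum a_ij (x_i -+ x_j)^2 yields the strict
   bounds 2 P (M - 1) |x|^2 < x' A x < (2 c_0 - c_2 - 2 P (M - 1)) |x|^2 for x <> 0.  The quadratic
   form of I (x) A + A (x) I splits into the forms of A on the rows and on the columns of the
   eigenvector, which doubles both bounds.  Finally P n is a ratio of Gamma values, and log-convexity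
   of Gamma together with the reflection formula gives P (M - 1) >= theta / (M + 1)^alpha. *)

section \<open>The coefficients \<open>c\<^sub>k\<close>\<close>

lemma frac_coeff_minus [simp]: "frac_coeff \<alpha> (- k) = frac_coeff \<alpha> k"
proof -
  have "(-1::real) powi (- k) = (-1) powi k"
    by (simp add: power_int_minus flip: power_int_inverse)
  then show ?thesis
    unfolding frac_coeff_def by (simp add: algebra_simps)
qed

lemma frac_coeff_abs: "frac_coeff \<alpha> \<bar>k\<bar> = frac_coeff \<alpha> k"
  by (cases "0 \<le> k") auto

lemma frac_coeff_0: "frac_coeff \<alpha> 0 = Gamma (\<alpha> + 1) / (Gamma (\<alpha>/2 + 1))\<^sup>2"
  unfolding frac_coeff_def by (simp add: rGamma_inverse_Gamma power2_eq_square field_simps)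

lemma frac_coeff_0_pos:
  assumes "0 < \<alpha>" shows "0 < frac_coeff \<alpha> 0"
proof -
  have "0 < Gamma (\<alpha> + 1)" "0 < Gamma (\<alpha>/2 + 1)" using assms by simp_all
  then show ?thesis unfolding frac_coeff_0 by simp
qed

lemma frac_coeff_Suc_mult:
  "frac_coeff \<alpha> (int (Suc n)) * (real n + 1 + \<alpha>/2) = frac_coeff \<alpha> (int n) * (real n - \<alpha>/2)"
proof -
  have r1: "rGamma (\<alpha>/2 - of_int (int (Suc n)) + 1) = (\<alpha>/2 - real n) * rGamma (\<alpha>/2 - of_int (int n) + 1)"
    using rGamma_plus1[of "\<alpha>/2 - real n"] by simp
  have r2: "rGamma (\<alpha>/2 + of_int (int n) + 1) = (real n + 1 + \<alpha>/2) * rGamma (\<alpha>/2 + of_int (int (Suc n)) + 1)"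
    using rGamma_plus1[of "\<alpha>/2 + real n + 1"] by (simp add: algebra_simps)
  have sgn: "(-1::real) powi int (Suc n) = - ((-1) powi int n)"
    by (simp add: power_int_add)
  show ?thesis
    unfolding frac_coeff_def r1 r2 sgn by (simp add: field_simps)
qed

lemma frac_coeff_Suc:
  assumes "0 < \<alpha>"
  shows "frac_coeff \<alpha> (int (Suc n)) = frac_coeff \<alpha> (int n) * ((real n - \<alpha>/2) / (real n + 1 + \<alpha>/2))"
proof -
  have "real n + 1 + \<alpha>/2 \<noteq> 0" using assms by linarith
  with frac_coeff_Suc_mult[of \<alpha> n] show ?thesis by (simp add: field_simps)
qed

text \<open>Since the \<open>c\<^sub>k\<close> sum to zero over \<open>\<int>\<close>, \<open>frac_tail \<alpha> n\<close> is the tail \<open>- (\<Sum>k>n. c\<^sub>k)\<close>.\<close>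
definition frac_tail :: "real \<Rightarrow> nat \<Rightarrow> real" where
  "frac_tail \<alpha> n = frac_coeff \<alpha> (int n) * (\<alpha>/2 - real n) / \<alpha>"

lemma sum_frac_coeff_atMost:
  assumes "\<alpha> \<noteq> 0"
  shows "(\<Sum>k\<le>n. frac_coeff \<alpha> (int k)) = frac_coeff \<alpha> 0 / 2 + frac_tail \<alpha> n"
proof (induction n)
  case 0
  show ?case using assms by (simp add: frac_tail_def)
next
  case (Suc n)
  have "frac_tail \<alpha> n + frac_coeff \<alpha> (int (Suc n)) = frac_tail \<alpha> (Suc n)"
    using frac_coeff_Suc_mult[of \<alpha> n] assms unfolding frac_tail_def by (simp add: field_simps)
  with Suc show ?case by simp
qed

lemma sum_frac_coeff_row:
  assumes "\<alpha> \<noteq> 0" "i < M"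
  shows "(\<Sum>j<M. frac_coeff \<alpha> (int i - int j)) = frac_tail \<alpha> i + frac_tail \<alpha> (M - 1 - i)"
proof -
  have left: "(\<Sum>j<i. frac_coeff \<alpha> (int i - int j)) = (\<Sum>k\<le>i. frac_coeff \<alpha> (int k)) - frac_coeff \<alpha> 0"
  proof -
    have "(\<Sum>j<i. frac_coeff \<alpha> (int i - int j)) = (\<Sum>j<i. frac_coeff \<alpha> (int (Suc (i - Suc j))))"
      by (intro sum.cong) (auto simp: of_nat_diff)
    also have "\<dots> = (\<Sum>k<i. frac_coeff \<alpha> (int (Suc k)))"
      by (rule sum.nat_diff_reindex)
    also have "\<dots> = (\<Sum>k\<le>i. frac_coeff \<alpha> (int k)) - frac_coeff \<alpha> 0"
      by (simp add: sum.atMost_shift)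
    finally show ?thesis .
  qed
  have right: "(\<Sum>j\<in>{i..<M}. frac_coeff \<alpha> (int i - int j)) = (\<Sum>k\<le>M - 1 - i. frac_coeff \<alpha> (int k))"
  proof -
    have "(\<Sum>j\<in>{i..<M}. frac_coeff \<alpha> (int i - int j)) = (\<Sum>k\<in>{0..<M - i}. frac_coeff \<alpha> (int i - int (k + i)))"
      using sum.shift_bounds_nat_ivl[of "\<lambda>j. frac_coeff \<alpha> (int i - int j)" 0 i "M - i"] assms(2) by simp
    also have "\<dots> = (\<Sum>k<Suc (M - 1 - i). frac_coeff \<alpha> (int k))"
      using assms(2) by (intro sum.cong) (auto simp: Suc_diff_Suc)
    finally show ?thesis by (simp only: lessThan_Suc_atMost)
  qed
  have split: "{..<M} = {..<i} \<union> {i..<M}" using assms(2) by auto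
  have "(\<Sum>j<M. frac_coeff \<alpha> (int i - int j))
      = (\<Sum>j<i. frac_coeff \<alpha> (int i - int j)) + (\<Sum>j\<in>{i..<M}. frac_coeff \<alpha> (int i - int j))"
    unfolding split by (rule sum.union_disjoint) auto
  then show ?thesis
    unfolding left right sum_frac_coeff_atMost[OF assms(1)] by simp
qed

lemma frac_tail_Suc:
  assumes "0 < \<alpha>"
  shows "frac_tail \<alpha> (Suc n) = frac_tail \<alpha> n * ((real n + 1 - \<alpha>/2) / (real n + 1 + \<alpha>/2))"
proof -
  have ne: "real n + 1 + \<alpha>/2 \<noteq> 0" "\<alpha> \<noteq> 0" using assms by linarith+
  have tail: "frac_tail \<alpha> n = - frac_coeff \<alpha> (int (Suc n)) * (real n + 1 + \<alpha>/2) / \<alpha>"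
    using frac_coeff_Suc_mult[of \<alpha> n] ne unfolding frac_tail_def by (simp add: field_simps)
  have cancel: "(- x * d / \<alpha>) * (e / d) = - x * e / \<alpha>" if "d \<noteq> 0" for x d e :: real
    using that by simp
  show ?thesis
    unfolding tail cancel[OF ne(1)] frac_tail_def[of \<alpha> "Suc n"] by (simp add: algebra_simps)
qed

lemma frac_tail_pochhammer:
  assumes "0 < \<alpha>"
  shows "frac_tail \<alpha> n = frac_coeff \<alpha> 0 / 2 * pochhammer (1 - \<alpha>/2) n / pochhammer (1 + \<alpha>/2) n"
proof (induction n)
  case 0
  show ?case using assms by (simp add: frac_tail_def)
next
  case (Suc n)
  have "pochhammer (1 + \<alpha>/2) n \<noteq> 0" "1 + \<alpha>/2 + real n \<noteq> 0"
    using assms pochhammer_pos[of "1 + \<alpha>/2" n] by auto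
  then have "frac_tail \<alpha> (Suc n)
      = frac_coeff \<alpha> 0 / 2 * (pochhammer (1 - \<alpha>/2) n * (1 - \<alpha>/2 + real n))
        / (pochhammer (1 + \<alpha>/2) n * (1 + \<alpha>/2 + real n))"
    unfolding frac_tail_Suc[OF assms] Suc by (simp add: field_simps)
  then show ?case by (simp add: pochhammer_Suc)
qed

context
  fixes \<alpha> :: real
  assumes \<alpha>_pos: "0 < \<alpha>" and \<alpha>_le_2: "\<alpha> \<le> 2"
begin

lemma frac_coeff_1_neg: "frac_coeff \<alpha> 1 < 0"
  using frac_coeff_Suc[OF \<alpha>_pos, of 0] frac_coeff_0_pos[OF \<alpha>_pos] \<alpha>_pos
  by (simp add: mult_pos_neg divide_neg_pos)

lemma frac_coeff_Suc_ratio: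
  assumes "1 \<le> n"
  obtains q where "frac_coeff \<alpha> (int (Suc n)) = frac_coeff \<alpha> (int n) * q" "0 \<le> q" "q \<le> 1"
proof
  show "frac_coeff \<alpha> (int (Suc n)) = frac_coeff \<alpha> (int n) * ((real n - \<alpha>/2) / (real n + 1 + \<alpha>/2))"
    by (rule frac_coeff_Suc[OF \<alpha>_pos])
qed (use assms \<alpha>_pos \<alpha>_le_2 in auto)

lemma frac_coeff_nonpos: "1 \<le> n \<Longrightarrow> frac_coeff \<alpha> (int n) \<le> 0"
proof (induction n rule: dec_induct)
  case base
  show ?case using frac_coeff_1_neg by simp
next
  case (step n)
  then show ?case by (metis frac_coeff_Suc_ratio mult_nonpos_nonneg)
qed

lemma frac_coeff_le_Suc: "1 \<le> n \<Longrightarrow> frac_coeff \<alpha> (int n) \<le> frac_coeff \<alpha> (int (Suc n))"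
  by (metis frac_coeff_Suc_ratio frac_coeff_nonpos mult.right_neutral mult_left_mono_neg)

lemma frac_coeff_mono:
  assumes "1 \<le> m" "m \<le> n"
  shows "frac_coeff \<alpha> (int m) \<le> frac_coeff \<alpha> (int n)"
  using assms(2)
proof (induction n rule: dec_induct)
  case (step n)
  then show ?case using frac_coeff_le_Suc[of n] assms(1) by linarith
qed simp

lemma frac_coeff_1_less_2: "frac_coeff \<alpha> 1 < frac_coeff \<alpha> 2"
proof -
  define q where "q = (real 1 - \<alpha>/2) / (real 1 + 1 + \<alpha>/2)"
  have c2: "frac_coeff \<alpha> (int (Suc 1)) = frac_coeff \<alpha> (int 1) * q"
    unfolding q_def by (rule frac_coeff_Suc[OF \<alpha>_pos])
  have "q < 1" using \<alpha>_pos by (simp add: q_def)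
  from mult_strict_left_mono_neg[OF this frac_coeff_1_neg] show ?thesis
    using c2 by (simp add: numeral_2_eq_2)
qed

lemma frac_tail_nonneg: "0 \<le> frac_tail \<alpha> n"
proof (induction n)
  case 0
  show ?case using frac_coeff_0_pos[OF \<alpha>_pos] \<alpha>_pos by (simp add: frac_tail_def)
next
  case (Suc n)
  have "0 \<le> (real n + 1 - \<alpha>/2) / (real n + 1 + \<alpha>/2)" using \<alpha>_pos \<alpha>_le_2 by simp
  with Suc show ?case unfolding frac_tail_Suc[OF \<alpha>_pos] by (rule mult_nonneg_nonneg)
qed

lemma decseq_frac_tail: "decseq (frac_tail \<alpha>)"
proof (rule decseq_SucI)
  fix n
  define q where "q = (real n + 1 - \<alpha>/2) / (real n + 1 + \<alpha>/2)"
  have "0 \<le> q" "q \<le> 1" using \<alpha>_pos \<alpha>_le_2 by (auto simp: q_def)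
  then show "frac_tail \<alpha> (Suc n) \<le> frac_tail \<alpha> n"
    unfolding frac_tail_Suc[OF \<alpha>_pos] q_def[symmetric]
    using frac_tail_nonneg[of n] mult_left_mono[of q 1 "frac_tail \<alpha> n"] by simp
qed

lemma frac_tail_less_0:
  assumes "1 \<le> n"
  shows "frac_tail \<alpha> n < frac_tail \<alpha> 0"
proof -
  define q where "q = (real 0 + 1 - \<alpha>/2) / (real 0 + 1 + \<alpha>/2)"
  have "q < 1" using \<alpha>_pos by (simp add: q_def)
  moreover have "0 < frac_tail \<alpha> 0"
    using frac_coeff_0_pos[OF \<alpha>_pos] \<alpha>_pos by (simp add: frac_tail_def)
  ultimately have "frac_tail \<alpha> 1 < frac_tail \<alpha> 0"
    using frac_tail_Suc[OF \<alpha>_pos, of 0] mult_strict_left_mono[of q 1 "frac_tail \<alpha> 0"]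
    by (simp add: q_def)
  with decseqD[OF decseq_frac_tail assms] show ?thesis by linarith
qed

end

section \<open>Bounds from the Gamma function\<close>

lemma powr_one_minus_div_le_exp:
  fixes p t :: real
  assumes "0 < p" "t < p"
  shows "(1 - t / p) powr p \<le> exp (- t)"
proof -
  have pos: "0 < 1 - t / p" using assms by simp
  have "ln (1 - t / p) \<le> - (t / p)"
    using ln_le_minus_one[OF pos] by simp
  then have "p * ln (1 - t / p) \<le> - t"
    using assms(1) mult_left_mono[of "ln (1 - t / p)" "- (t / p)" p] by simp
  then show ?thesis
    using pos by (simp add: powr_def mult.commute)
qed

lemma Gamma_add_le_powr:
  fixes x s :: real
  assumes x: "0 < x" and s: "0 \<le> s" "s \<le> 1"
  shows "Gamma (x + s) \<le> x powr s * Gamma x"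
proof -
  have "(ln \<circ> Gamma) ((1 - s) *\<^sub>R x + s *\<^sub>R (x + 1))
      \<le> (1 - s) * (ln \<circ> Gamma) x + s * (ln \<circ> Gamma) (x + 1)"
    using x s by (intro convex_onD[OF log_convex_Gamma_real]) auto
  moreover have "(1 - s) *\<^sub>R x + s *\<^sub>R (x + 1) = x + s" by (simp add: algebra_simps)
  moreover have "ln (Gamma (x + 1)) = ln x + ln (Gamma x)"
  proof -
    have "x \<notin> \<int>\<^sub>\<le>\<^sub>0" using x by (auto elim!: nonpos_Ints_cases)
    then have "ln (Gamma (x + 1)) = ln (x * Gamma x)" by (simp add: Gamma_plus1)
    also have "\<dots> = ln x + ln (Gamma x)" using x by (intro ln_mult_pos) simp_all
    finally show ?thesis .
  qed
  ultimately have "ln (Gamma (x + s)) \<le> s * ln x + ln (Gamma x)"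
    by (simp add: algebra_simps)
  moreover have "0 < Gamma (x + s)" using x s by simp
  ultimately have "Gamma (x + s) \<le> exp (s * ln x + ln (Gamma x))"
    by (metis exp_le_cancel_iff exp_ln)
  also have "\<dots> = x powr s * Gamma x"
    using x by (simp add: exp_add powr_def)
  finally show ?thesis .
qed

lemma Gamma_reflection_real: "Gamma x * Gamma (1 - x) = pi / sin (pi * x)"
proof -
  have "Gamma (complex_of_real x) * Gamma (1 - complex_of_real x)
      = complex_of_real pi / sin (complex_of_real pi * complex_of_real x)"
    by (rule Gamma_reflection_complex)
  moreover have "Gamma (1 - complex_of_real x) = complex_of_real (Gamma (1 - x))"
    using Gamma_complex_of_real[of "1 - x"] by simp
  moreover have "sin (complex_of_real pi * complex_of_real x) = complex_of_real (sin (pi * x))"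
    by (simp flip: sin_of_real)
  ultimately have "complex_of_real (Gamma x * Gamma (1 - x)) = complex_of_real (pi / sin (pi * x))"
    by (simp add: Gamma_complex_of_real)
  then show ?thesis by (simp only: of_real_eq_iff)
qed

lemma Gamma_ratio_le_powr:
  fixes m \<beta> :: real
  assumes m: "1 \<le> m" and \<beta>: "1/2 \<le> \<beta>" "\<beta> < 1"
  shows "Gamma (m + \<beta>) \<le> (m + 1) powr (2 * \<beta>) * Gamma (m - \<beta>)"
proof -
  define y where "y = m - \<beta>"
  have y: "0 < y" using m \<beta> by (simp add: y_def)
  have "Gamma (m + \<beta>) = Gamma ((y + 1) + (2 * \<beta> - 1))" by (simp add: y_def algebra_simps)
  also have "\<dots> \<le> (y + 1) powr (2 * \<beta> - 1) * Gamma (y + 1)"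
    using y \<beta> by (intro Gamma_add_le_powr) auto
  also have "Gamma (y + 1) = y * Gamma y"
    using y by (intro Gamma_plus1) (auto elim!: nonpos_Ints_cases)
  also have "(y + 1) powr (2 * \<beta> - 1) * (y * Gamma y) \<le> (m + 1) powr (2 * \<beta> - 1) * ((m + 1) * Gamma y)"
    using y \<beta> by (intro mult_mono powr_mono2 mult_right_mono) (auto simp: y_def less_imp_le)
  also have "\<dots> = (m + 1) powr (2 * \<beta>) * Gamma (m - \<beta>)"
    using m by (simp add: y_def powr_diff field_simps)
  finally show ?thesis .
qed

text \<open>By \<open>frac_tail_Gamma\<close>, \<open>frac_tail \<alpha> n\<close> behaves like \<open>tail_const \<alpha> * n powr - \<alpha>\<close>.\<close>
definition tail_const :: "real \<Rightarrow> real" where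
  "tail_const \<alpha> = Gamma (\<alpha> + 1) * sin (pi * \<alpha> / 2) / (pi * \<alpha>)"

lemma tail_const_nonneg: "0 < \<alpha> \<Longrightarrow> \<alpha> \<le> 2 \<Longrightarrow> 0 \<le> tail_const \<alpha>"
  unfolding tail_const_def by (auto intro!: divide_nonneg_pos mult_nonneg_nonneg sin_ge_zero)

lemma frac_tail_Gamma:
  assumes "0 < \<alpha>" "\<alpha> < 2"
  shows "frac_tail \<alpha> n = tail_const \<alpha> * (Gamma (real n + 1 - \<alpha>/2) / Gamma (real n + 1 + \<alpha>/2))"
proof -
  define \<beta> where "\<beta> = \<alpha> / 2"
  have \<beta>: "0 < \<beta>" "\<beta> < 1" using assms by (simp_all add: \<beta>_def)
  have not_pole: "\<beta> \<notin> \<int>\<^sub>\<le>\<^sub>0" "1 - \<beta> \<notin> \<int>\<^sub>\<le>\<^sub>0" "1 + \<beta> \<notin> \<int>\<^sub>\<le>\<^sub>0"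
    using \<beta> by (auto elim!: nonpos_Ints_cases)
  have Gamma_pos: "0 < Gamma \<beta>" "0 < Gamma (1 - \<beta>)" "0 < Gamma (real n + 1 + \<beta>)" "0 < Gamma (\<alpha> + 1)"
    using \<beta> assms by simp_all
  have sin_pos: "0 < sin (pi * \<beta>)" using \<beta> by (intro sin_gt_zero) auto
  have Gamma_1_plus: "Gamma (1 + \<beta>) = \<beta> * Gamma \<beta>"
    using Gamma_plus1[OF not_pole(1)] by (simp add: add.commute)
  have "frac_tail \<alpha> n = frac_coeff \<alpha> 0 / 2 * pochhammer (1 - \<beta>) n / pochhammer (1 + \<beta>) n"
    using frac_tail_pochhammer[OF assms(1)] by (simp add: \<beta>_def)
  also have "\<dots> = Gamma (\<alpha> + 1) / (2 * Gamma (1 + \<beta>) * Gamma (1 - \<beta>))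
      * (Gamma (real n + 1 - \<beta>) / Gamma (real n + 1 + \<beta>))"
    using Gamma_pos Gamma_1_plus \<beta>
    by (simp add: frac_coeff_0 pochhammer_Gamma[OF not_pole(2)] pochhammer_Gamma[OF not_pole(3)]
        \<beta>_def[symmetric] power2_eq_square field_simps add.commute)
  also have "2 * Gamma (1 + \<beta>) * Gamma (1 - \<beta>) = \<alpha> * (Gamma \<beta> * Gamma (1 - \<beta>))"
    unfolding Gamma_1_plus by (simp add: \<beta>_def)
  also have "\<dots> = pi * \<alpha> / sin (pi * \<alpha> / 2)"
    unfolding Gamma_reflection_real by (simp add: \<beta>_def)
  finally show ?thesis
    using sin_pos by (simp add: tail_const_def \<beta>_def)
qed

lemma theta_const_le:
  assumes "0 < \<alpha>" "\<alpha> \<le> 2"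
  shows "theta_const \<alpha> \<le> tail_const \<alpha>"
proof -
  have "(1 - (1 + \<alpha>) / (5 + \<alpha>/2)) powr (5 + \<alpha>/2) \<le> exp (- (1 + \<alpha>))"
    using assms by (intro powr_one_minus_div_le_exp) auto
  then have "(1 - (1 + \<alpha>) / (5 + \<alpha>/2)) powr (5 + \<alpha>/2) * exp (1 + \<alpha>)
      \<le> exp (- (1 + \<alpha>)) * exp (1 + \<alpha>)"
    by (rule mult_right_mono) simp
  also have "exp (- (1 + \<alpha>)) * exp (1 + \<alpha>) = 1"
    by (simp flip: exp_add)
  finally have "(1 - (1 + \<alpha>) / (5 + \<alpha>/2)) powr (5 + \<alpha>/2) * exp (1 + \<alpha>) \<le> 1" .
  with tail_const_nonneg[OF assms] show ?thesis
    unfolding theta_const_def tail_const_def using mult_right_mono by fastforce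
qed

lemma theta_const_le_frac_tail:
  assumes \<alpha>: "1 < \<alpha>" "\<alpha> \<le> 2" and M: "1 \<le> M"
  shows "theta_const \<alpha> / real (M + 1) powr \<alpha> \<le> frac_tail \<alpha> (M - 1)"
proof -
  have "theta_const \<alpha> / real (M + 1) powr \<alpha> \<le> tail_const \<alpha> / real (M + 1) powr \<alpha>"
    using theta_const_le[of \<alpha>] \<alpha> by (intro divide_right_mono) auto
  also have "\<dots> \<le> frac_tail \<alpha> (M - 1)"
  proof (cases "\<alpha> = 2")
    case True
    then show ?thesis using frac_tail_nonneg[of \<alpha> "M - 1"] by (simp add: tail_const_def)
  next
    case False
    with \<alpha> have \<alpha>_less: "\<alpha> < 2" by simp
    have ratio: "Gamma (real M + \<alpha>/2) \<le> real (M + 1) powr \<alpha> * Gamma (real M - \<alpha>/2)"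
      using Gamma_ratio_le_powr[of "real M" "\<alpha>/2"] M \<alpha> \<alpha>_less by (simp add: add.commute)
    have pos: "0 < Gamma (real M + \<alpha>/2)" "0 < Gamma (real M - \<alpha>/2)"
      using M \<alpha>_less \<alpha> by simp_all
    have "1 / real (M + 1) powr \<alpha> \<le> Gamma (real M - \<alpha>/2) / Gamma (real M + \<alpha>/2)"
      using ratio pos by (simp add: field_simps)
    then have "tail_const \<alpha> / real (M + 1) powr \<alpha>
        \<le> tail_const \<alpha> * (Gamma (real M - \<alpha>/2) / Gamma (real M + \<alpha>/2))"
      using mult_left_mono[OF _ tail_const_nonneg] \<alpha> by fastforce
    also have "\<dots> = frac_tail \<alpha> (M - 1)"
      using M \<alpha> \<alpha>_less by (simp add: frac_tail_Gamma of_nat_diff)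
    finally show ?thesis .
  qed
  finally show ?thesis .
qed

section \<open>Quadratic forms of symmetric Z-matrices\<close>

lemma symmetric_form_square_identity:
  fixes a :: "nat \<Rightarrow> nat \<Rightarrow> real"
  assumes sym: "\<And>i j. i < n \<Longrightarrow> j < n \<Longrightarrow> a i j = a j i" and s: "s * s = 1"
  shows "(\<Sum>i<n. \<Sum>j<n. a i j * (x i + s * x j)\<^sup>2)
       = 2 * (\<Sum>i<n. (\<Sum>j<n. a i j) * (x i)\<^sup>2) + 2 * s * (\<Sum>i<n. \<Sum>j<n. a i j * x i * x j)"
proof -
  have expand: "a i j * (x i + s * x j)\<^sup>2 = a i j * (x i)\<^sup>2 + a i j * (x j)\<^sup>2 + 2 * s * (a i j * x i * x j)" for i j
    using s by (simp add: power2_eq_square algebra_simps)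
  have "(\<Sum>i<n. \<Sum>j<n. a i j * (x j)\<^sup>2) = (\<Sum>j<n. \<Sum>i<n. a j i * (x j)\<^sup>2)"
    by (subst sum.swap) (simp add: sym)
  then show ?thesis
    by (simp add: expand sum.distrib sum_distrib_left sum_distrib_right algebra_simps)
qed

lemma sum_offdiag_nonpos_le:
  fixes a y :: "nat \<Rightarrow> nat \<Rightarrow> real"
  assumes off: "\<And>i j. i < n \<Longrightarrow> j < n \<Longrightarrow> i \<noteq> j \<Longrightarrow> a i j \<le> 0"
    and y: "\<And>i j. 0 \<le> y i j" and k: "k + 1 < n"
  shows "(\<Sum>i<n. \<Sum>j<n. a i j * y i j) \<le> (\<Sum>i<n. a i i * y i i) + a k (k + 1) * y k (k + 1)"
proof -
  have "a i j * y i j \<le> (if j = i then a i i * y i i else 0)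
      + (if i = k then if j = k + 1 then a k (k + 1) * y k (k + 1) else 0 else 0)"
    if "i < n" "j < n" for i j
    using off[OF that] y[of i j] by (auto simp: mult_nonpos_nonneg)
  then have "(\<Sum>i<n. \<Sum>j<n. a i j * y i j) \<le> (\<Sum>i<n. \<Sum>j<n. (if j = i then a i i * y i i else 0)
      + (if i = k then if j = k + 1 then a k (k + 1) * y k (k + 1) else 0 else 0))"
    by (intro sum_mono) auto
  also have "\<dots> = (\<Sum>i<n. a i i * y i i + (if i = k then a k (k + 1) * y k (k + 1) else 0))"
    using k by (intro sum.cong refl) (simp add: sum.distrib)
  also have "\<dots> = (\<Sum>i<n. a i i * y i i) + a k (k + 1) * y k (k + 1)"
    using k by (simp add: sum.distrib)
  finally show ?thesis .
qed

lemma nonzero_head_or_link: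
  fixes x :: "nat \<Rightarrow> real"
  assumes s: "s * s = 1" and nz: "\<exists>i<n. x i \<noteq> 0"
  shows "x 0 \<noteq> 0 \<or> (\<exists>k. k + 1 < n \<and> x k + s * x (k + 1) \<noteq> 0)"
proof (rule ccontr)
  assume "\<not> ?thesis"
  then have x0: "x 0 = 0" and link: "\<And>k. k + 1 < n \<Longrightarrow> x k + s * x (k + 1) = 0"
    by auto
  have "s \<noteq> 0" using s by auto
  have "i < n \<Longrightarrow> x i = 0" for i
  proof (induction i)
    case (Suc i)
    with link[of i] \<open>s \<noteq> 0\<close> show ?case by simp
  qed (use x0 in simp)
  with nz show False by blast
qed

lemma signed_form_le:
  fixes a :: "nat \<Rightarrow> nat \<Rightarrow> real" and x :: "nat \<Rightarrow> real"
  assumes sym: "\<And>i j. i < n \<Longrightarrow> j < n \<Longrightarrow> a i j = a j i"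
    and off: "\<And>i j. i < n \<Longrightarrow> j < n \<Longrightarrow> i \<noteq> j \<Longrightarrow> a i j \<le> 0"
    and s: "s * s = 1" and k: "k + 1 < n"
  shows "s * (\<Sum>i<n. \<Sum>j<n. a i j * x i * x j)
    \<le> (\<Sum>i<n. ((1 + s)\<^sup>2 / 2 * a i i - (\<Sum>j<n. a i j)) * (x i)\<^sup>2)
      + a k (k + 1) * (x k + s * x (k + 1))\<^sup>2 / 2"
proof -
  have "(\<Sum>i<n. \<Sum>j<n. a i j * (x i + s * x j)\<^sup>2)
      \<le> (\<Sum>i<n. a i i * (x i + s * x i)\<^sup>2) + a k (k + 1) * (x k + s * x (k + 1))\<^sup>2"
    by (rule sum_offdiag_nonpos_le[where y = "\<lambda>i j. (x i + s * x j)\<^sup>2"]) (use off k in auto)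
  moreover have "(\<Sum>i<n. a i i * (x i + s * x i)\<^sup>2) = (1 + s)\<^sup>2 * (\<Sum>i<n. a i i * (x i)\<^sup>2)"
  proof -
    have diag: "a i i * (x i + s * x i)\<^sup>2 = (1 + s)\<^sup>2 * (a i i * (x i)\<^sup>2)" for i
      by (simp add: power2_eq_square algebra_simps)
    show ?thesis unfolding diag by (simp add: sum_distrib_left)
  qed
  moreover have "(\<Sum>i<n. ((1 + s)\<^sup>2 / 2 * a i i - (\<Sum>j<n. a i j)) * (x i)\<^sup>2)
      = (1 + s)\<^sup>2 * (\<Sum>i<n. a i i * (x i)\<^sup>2) / 2 - (\<Sum>i<n. (\<Sum>j<n. a i j) * (x i)\<^sup>2)"
  proof -
    have summand: "((1 + s)\<^sup>2 / 2 * a i i - (\<Sum>j<n. a i j)) * (x i)\<^sup>2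
        = (1 + s)\<^sup>2 * (a i i * (x i)\<^sup>2) / 2 - (\<Sum>j<n. a i j) * (x i)\<^sup>2" for i
      by (simp add: algebra_simps)
    show ?thesis
      unfolding summand sum_subtractf by (simp only: sum_distrib_left sum_divide_distrib)
  qed
  ultimately show ?thesis
    using symmetric_form_square_identity[where a = a and n = n and x = x, OF sym s] by linarith
qed

text \<open>Strictness comes from the first row when \<open>x 0 \<noteq> 0\<close>, and otherwise from a
  superdiagonal entry at a position where \<open>x k + s * x (k + 1) \<noteq> 0\<close>.\<close>

lemma signed_form_less:
  fixes a :: "nat \<Rightarrow> nat \<Rightarrow> real" and x :: "nat \<Rightarrow> real"
  assumes n: "2 \<le> n"
    and sym: "\<And>i j. i < n \<Longrightarrow> j < n \<Longrightarrow> a i j = a j i"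
    and off: "\<And>i j. i < n \<Longrightarrow> j < n \<Longrightarrow> i \<noteq> j \<Longrightarrow> a i j \<le> 0"
    and adj: "\<And>i. i + 1 < n \<Longrightarrow> a i (i + 1) < 0"
    and s: "s * s = 1"
    and row: "\<And>i. i < n \<Longrightarrow> (1 + s)\<^sup>2 / 2 * a i i - (\<Sum>j<n. a i j) \<le> D"
    and row_0: "(1 + s)\<^sup>2 / 2 * a 0 0 - (\<Sum>j<n. a 0 j) < D"
    and nz: "\<exists>i<n. x i \<noteq> 0"
  shows "s * (\<Sum>i<n. \<Sum>j<n. a i j * x i * x j) < D * (\<Sum>i<n. (x i)\<^sup>2)"
proof -
  define d where "d i = (1 + s)\<^sup>2 / 2 * a i i - (\<Sum>j<n. a i j)" for i
  have "(D - d 0) * (x 0)\<^sup>2 \<le> (\<Sum>i<n. (D - d i) * (x i)\<^sup>2)"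
    using n row by (intro member_le_sum[where f = "\<lambda>i. (D - d i) * (x i)\<^sup>2"]) (auto simp: d_def)
  then have rows: "(\<Sum>i<n. d i * (x i)\<^sup>2) \<le> D * (\<Sum>i<n. (x i)\<^sup>2) - (D - d 0) * (x 0)\<^sup>2"
    by (simp add: sum_distrib_left sum_subtractf left_diff_distrib)
  have d_0: "0 < D - d 0" using row_0 by (simp add: d_def)
  obtain k where k: "k + 1 < n"
    and gap: "0 < (D - d 0) * (x 0)\<^sup>2 - a k (k + 1) * (x k + s * x (k + 1))\<^sup>2 / 2"
  proof (cases "x 0 = 0")
    case True
    with nonzero_head_or_link[OF s nz] obtain k where k: "k + 1 < n" "x k + s * x (k + 1) \<noteq> 0"
      by blast
    then have "a k (k + 1) * (x k + s * x (k + 1))\<^sup>2 < 0"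
      using adj[OF k(1)] by (simp add: mult_neg_pos)
    with k(1) that[of k] True show thesis by simp
  next
    case False
    then have "0 < (D - d 0) * (x 0)\<^sup>2" using d_0 by simp
    moreover have "a 0 1 * (x 0 + s * x 1)\<^sup>2 \<le> 0"
      using adj[of 0] n by (simp add: mult_nonpos_nonneg)
    ultimately show thesis using n that[of 0] by simp
  qed
  show ?thesis
    using signed_form_le[where a = a and n = n and x = x, OF sym off s k] rows gap
    unfolding d_def by linarith
qed

lemma zmatrix_form_bounds:
  fixes a :: "nat \<Rightarrow> nat \<Rightarrow> real" and x :: "nat \<Rightarrow> real"
  assumes n: "2 \<le> n"
    and sym: "\<And>i j. i < n \<Longrightarrow> j < n \<Longrightarrow> a i j = a j i"
    and off: "\<And>i j. i < n \<Longrightarrow> j < n \<Longrightarrow> i \<noteq> j \<Longrightarrow> a i j \<le> 0"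
    and adj: "\<And>i. i + 1 < n \<Longrightarrow> a i (i + 1) < 0"
    and lower: "\<And>i. i < n \<Longrightarrow> L \<le> (\<Sum>j<n. a i j)" "L < (\<Sum>j<n. a 0 j)"
    and upper: "\<And>i. i < n \<Longrightarrow> 2 * a i i - (\<Sum>j<n. a i j) \<le> U" "2 * a 0 0 - (\<Sum>j<n. a 0 j) < U"
    and nz: "\<exists>i<n. x i \<noteq> 0"
  shows "L * (\<Sum>i<n. (x i)\<^sup>2) < (\<Sum>i<n. \<Sum>j<n. a i j * x i * x j)"
    and "(\<Sum>i<n. \<Sum>j<n. a i j * x i * x j) < U * (\<Sum>i<n. (x i)\<^sup>2)"
proof -
  have "- 1 * (\<Sum>i<n. \<Sum>j<n. a i j * x i * x j) < - L * (\<Sum>i<n. (x i)\<^sup>2)"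
    by (rule signed_form_less[where a = a and x = x and n = n and s = "- 1" and D = "- L",
          OF n sym off adj _ _ _ nz])
      (use lower in auto)
  then show "L * (\<Sum>i<n. (x i)\<^sup>2) < (\<Sum>i<n. \<Sum>j<n. a i j * x i * x j)" by simp
  have "1 * (\<Sum>i<n. \<Sum>j<n. a i j * x i * x j) < U * (\<Sum>i<n. (x i)\<^sup>2)"
    by (rule signed_form_less[where a = a and x = x and n = n and s = 1 and D = U,
          OF n sym off adj _ _ _ nz])
      (use upper in auto)
  then show "(\<Sum>i<n. \<Sum>j<n. a i j * x i * x j) < U * (\<Sum>i<n. (x i)\<^sup>2)" by simp
qed

section \<open>The one-dimensional matrix\<close>

definition toeplitz_hankel :: "real \<Rightarrow> nat \<Rightarrow> real mat" where
  "toeplitz_hankel \<alpha> M = T0 \<alpha> M - Hank \<alpha> M"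

lemma tauT1_index:
  "i < M \<Longrightarrow> j < M \<Longrightarrow> tauT1 \<mu> \<alpha> M $$ (i, j) = \<mu> * toeplitz_hankel \<alpha> M $$ (i, j)"
  by (simp add: tauT1_def toeplitz_hankel_def T0_def Hank_def algebra_simps)

lemma tauT1_carrier: "tauT1 \<mu> \<alpha> M \<in> carrier_mat M M"
  unfolding tauT1_def T0_def Hank_def by (intro minus_carrier_mat smult_carrier_mat) auto

lemma toeplitz_hankel_index:
  "i < M \<Longrightarrow> j < M \<Longrightarrow>
    toeplitz_hankel \<alpha> M $$ (i, j) = frac_coeff \<alpha> (int i - int j) - Hank \<alpha> M $$ (i, j)"
  by (simp add: toeplitz_hankel_def T0_def Hank_def)

lemma Hank_index_cases [consumes 2]:
  assumes "i < M" "j < M"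
  obtains (zero) "Hank \<alpha> M $$ (i, j) = 0"
  | (coeff) m where "2 \<le> m" "\<bar>int i - int j\<bar> \<le> int m" "Hank \<alpha> M $$ (i, j) = frac_coeff \<alpha> (int m)"
proof -
  consider (low) "int i + int j + 2 \<le> int M - 1"
    | (mid) "\<not> int i + int j + 2 \<le> int M - 1" "int i + int j + 2 \<le> int M + 2"
    | (high) "int M + 2 < int i + int j + 2"
    by linarith
  then show thesis
  proof cases
    case low
    then show thesis using assms that(2)[of "i + j + 2"] by (simp add: Hank_def Let_def ac_simps)
  next
    case mid
    then show thesis using assms that(1) by (simp add: Hank_def Let_def)
  next
    case high
    have "2 * int M + 2 - (int i + int j + 2) = int (2 * M - i - j)" using assms by simp
    with high show thesis using assms that(2)[of "2 * M - i - j"] by (simp add: Hank_def Let_def)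
  qed
qed

lemma Hank_symmetric: "i < M \<Longrightarrow> j < M \<Longrightarrow> Hank \<alpha> M $$ (i, j) = Hank \<alpha> M $$ (j, i)"
  by (simp add: Hank_def add.commute)

lemma toeplitz_hankel_symmetric:
  "i < M \<Longrightarrow> j < M \<Longrightarrow> toeplitz_hankel \<alpha> M $$ (i, j) = toeplitz_hankel \<alpha> M $$ (j, i)"
  using frac_coeff_minus[of \<alpha> "int j - int i"]
  by (simp add: toeplitz_hankel_index Hank_symmetric[of i M j])

context
  fixes \<alpha> :: real
  assumes \<alpha>_pos: "0 < \<alpha>" and \<alpha>_le_2: "\<alpha> \<le> 2"
begin

lemma Hank_index_bounds:
  assumes "i < M" "j < M"
  shows "frac_coeff \<alpha> 2 \<le> Hank \<alpha> M $$ (i, j) \<and> Hank \<alpha> M $$ (i, j) \<le> 0"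
  using assms
proof (cases rule: Hank_index_cases[where \<alpha> = \<alpha>])
  case zero
  then show ?thesis using frac_coeff_nonpos[OF \<alpha>_pos \<alpha>_le_2, of 2] by simp
next
  case (coeff m)
  then show ?thesis
    using frac_coeff_nonpos[OF \<alpha>_pos \<alpha>_le_2, of m] frac_coeff_mono[OF \<alpha>_pos \<alpha>_le_2, of 2 m] by simp
qed

lemma toeplitz_hankel_offdiag_nonpos:
  assumes "i < M" "j < M" "i \<noteq> j"
  shows "toeplitz_hankel \<alpha> M $$ (i, j) \<le> 0"
proof -
  define d where "d = nat \<bar>int i - int j\<bar>"
  have d: "1 \<le> d" "frac_coeff \<alpha> (int i - int j) = frac_coeff \<alpha> (int d)"
    using assms(3) frac_coeff_abs[of \<alpha> "int i - int j"] by (auto simp: d_def)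
  from assms(1,2) show ?thesis
  proof (cases rule: Hank_index_cases[where \<alpha> = \<alpha>])
    case zero
    then show ?thesis
      using d frac_coeff_nonpos[OF \<alpha>_pos \<alpha>_le_2 d(1)] assms by (simp add: toeplitz_hankel_index)
  next
    case (coeff m)
    then have "d \<le> m" by (simp add: d_def)
    with coeff show ?thesis
      using d frac_coeff_mono[OF \<alpha>_pos \<alpha>_le_2 d(1)] assms by (simp add: toeplitz_hankel_index)
  qed
qed

lemma toeplitz_hankel_superdiag_neg:
  assumes "i + 1 < M"
  shows "toeplitz_hankel \<alpha> M $$ (i, i + 1) < 0"
proof -
  have "toeplitz_hankel \<alpha> M $$ (i, i + 1) = frac_coeff \<alpha> 1 - Hank \<alpha> M $$ (i, i + 1)"
    using assms frac_coeff_minus[of \<alpha> 1] by (simp add: toeplitz_hankel_index)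
  with Hank_index_bounds[of i M "i + 1"] assms frac_coeff_1_less_2[OF \<alpha>_pos \<alpha>_le_2]
  show ?thesis by simp
qed

lemma toeplitz_hankel_row_sum_ge:
  assumes "i < M"
  shows "frac_tail \<alpha> i + frac_tail \<alpha> (M - 1 - i) - Hank \<alpha> M $$ (i, i)
    \<le> (\<Sum>j<M. toeplitz_hankel \<alpha> M $$ (i, j))"
proof -
  have "(\<Sum>j\<in>{..<M} - {i}. Hank \<alpha> M $$ (i, j)) \<le> 0"
    using Hank_index_bounds assms by (intro sum_nonpos) auto
  then have "(\<Sum>j<M. Hank \<alpha> M $$ (i, j)) \<le> Hank \<alpha> M $$ (i, i)"
    using assms by (simp add: sum.remove[of "{..<M}" i])
  moreover have "(\<Sum>j<M. toeplitz_hankel \<alpha> M $$ (i, j))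
      = (\<Sum>j<M. frac_coeff \<alpha> (int i - int j)) - (\<Sum>j<M. Hank \<alpha> M $$ (i, j))"
    using assms by (simp add: toeplitz_hankel_index sum_subtractf)
  ultimately show ?thesis
    using sum_frac_coeff_row[of \<alpha> i M] \<alpha>_pos assms by simp
qed

lemma toeplitz_hankel_form_bounds:
  fixes x :: "nat \<Rightarrow> real"
  assumes M: "2 \<le> M" and nz: "\<exists>i<M. x i \<noteq> 0"
  defines "P \<equiv> frac_tail \<alpha> (M - 1)"
  shows "2 * P * (\<Sum>i<M. (x i)\<^sup>2) < (\<Sum>i<M. \<Sum>j<M. toeplitz_hankel \<alpha> M $$ (i, j) * x i * x j)"
    and "(\<Sum>i<M. \<Sum>j<M. toeplitz_hankel \<alpha> M $$ (i, j) * x i * x j)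
      < (2 * frac_coeff \<alpha> 0 - frac_coeff \<alpha> 2 - 2 * P) * (\<Sum>i<M. (x i)\<^sup>2)"
proof -
  have tails: "P \<le> frac_tail \<alpha> i" "P \<le> frac_tail \<alpha> (M - 1 - i)" if "i < M" for i
    unfolding P_def using that by (auto intro: decseqD[OF decseq_frac_tail[OF \<alpha>_pos \<alpha>_le_2]])
  have tail_0: "P < frac_tail \<alpha> 0"
    unfolding P_def using M by (intro frac_tail_less_0[OF \<alpha>_pos \<alpha>_le_2]) simp
  have row: "2 * P - Hank \<alpha> M $$ (i, i) \<le> (\<Sum>j<M. toeplitz_hankel \<alpha> M $$ (i, j))" if "i < M" for i
    using toeplitz_hankel_row_sum_ge[OF that] tails[OF that] by linarith
  have row_0: "2 * P - Hank \<alpha> M $$ (0, 0) < (\<Sum>j<M. toeplitz_hankel \<alpha> M $$ (0, j))"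
    using toeplitz_hankel_row_sum_ge[of 0 M] tails[of 0] tail_0 M by simp
  have diag: "toeplitz_hankel \<alpha> M $$ (i, i) = frac_coeff \<alpha> 0 - Hank \<alpha> M $$ (i, i)" if "i < M" for i
    using that by (simp add: toeplitz_hankel_index)
  have M0: "0 < M" using M by simp
  have lower: "2 * P \<le> (\<Sum>j<M. toeplitz_hankel \<alpha> M $$ (i, j))" if "i < M" for i
    using row[OF that] Hank_index_bounds[OF that that] by linarith
  have lower_0: "2 * P < (\<Sum>j<M. toeplitz_hankel \<alpha> M $$ (0, j))"
    using row_0 Hank_index_bounds[OF M0 M0] by linarith
  have upper: "2 * toeplitz_hankel \<alpha> M $$ (i, i) - (\<Sum>j<M. toeplitz_hankel \<alpha> M $$ (i, j))
      \<le> 2 * frac_coeff \<alpha> 0 - frac_coeff \<alpha> 2 - 2 * P" if "i < M" for i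
    using row[OF that] Hank_index_bounds[OF that that] diag[OF that] by linarith
  have upper_0: "2 * toeplitz_hankel \<alpha> M $$ (0, 0) - (\<Sum>j<M. toeplitz_hankel \<alpha> M $$ (0, j))
      < 2 * frac_coeff \<alpha> 0 - frac_coeff \<alpha> 2 - 2 * P"
    using row_0 Hank_index_bounds[OF M0 M0] diag[OF M0] by linarith
  note bounds = zmatrix_form_bounds[where a = "\<lambda>i j. toeplitz_hankel \<alpha> M $$ (i, j)",
      OF M toeplitz_hankel_symmetric toeplitz_hankel_offdiag_nonpos toeplitz_hankel_superdiag_neg
      lower lower_0 upper upper_0 nz]
  show "2 * P * (\<Sum>i<M. (x i)\<^sup>2) < (\<Sum>i<M. \<Sum>j<M. toeplitz_hankel \<alpha> M $$ (i, j) * x i * x j)"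
    by (rule bounds(1))
  show "(\<Sum>i<M. \<Sum>j<M. toeplitz_hankel \<alpha> M $$ (i, j) * x i * x j)
      < (2 * frac_coeff \<alpha> 0 - frac_coeff \<alpha> 2 - 2 * P) * (\<Sum>i<M. (x i)\<^sup>2)"
    by (rule bounds(2))
qed

end

section \<open>Kronecker sums\<close>

lemma sum_lessThan_mult_split:
  fixes g :: "nat \<Rightarrow> 'a::comm_monoid_add"
  shows "(\<Sum>I<m * n. g I) = (\<Sum>p<m. \<Sum>i<n. g (p * n + i))"
proof -
  have "(\<Sum>I\<in>{p * n..<p * n + n}. g I) = (\<Sum>i<n. g (p * n + i))" for p
    using sum.shift_bounds_nat_ivl[of g 0 "p * n" n] by (simp add: atLeast0LessThan add.commute)
  then show ?thesis
    using sum.nat_group[of g n m] by simp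
qed

lemma mult_add_less_mult:
  fixes p i m n :: nat
  assumes "p < m" "i < n"
  shows "p * n + i < m * n"
proof -
  have "p * n + i < (p + 1) * n" using assms(2) by simp
  also have "\<dots> \<le> m * n" using assms(1) by (intro mult_le_mono1) simp
  finally show ?thesis .
qed

lemma kron_index:
  assumes "A \<in> carrier_mat m m" "B \<in> carrier_mat n n" "p < m" "q < m" "i < n" "j < n"
  shows "kron A B $$ (p * n + i, q * n + j) = A $$ (p, q) * B $$ (i, j)"
proof -
  have "p * n + i < m * n" "q * n + j < m * n"
    using assms by (auto intro: mult_add_less_mult)
  then show ?thesis using assms unfolding kron_def by simp
qed

lemma kron_sum_index:
  fixes A :: "'a::comm_ring_1 mat"
  assumes A: "A \<in> carrier_mat n n" and "p < n" "q < n" "i < n" "j < n"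
  shows "(kron (1\<^sub>m n) A + kron A (1\<^sub>m n)) $$ (p * n + i, q * n + j)
    = (if p = q then A $$ (i, j) else 0) + (if i = j then A $$ (p, q) else 0)"
proof -
  have "dim_row (kron A (1\<^sub>m n)) = n * n" "dim_col (kron A (1\<^sub>m n)) = n * n"
    using A by (simp_all add: kron_def)
  with assms mult_add_less_mult[of p n i n] mult_add_less_mult[of q n j n] show ?thesis
    by (simp add: kron_index[OF one_carrier_mat A] kron_index[OF A one_carrier_mat])
qed

lemma kron_sum_quadratic_form:
  fixes A :: "real mat" and x :: "nat \<Rightarrow> real"
  assumes A: "A \<in> carrier_mat n n"
  shows "(\<Sum>I<n * n. \<Sum>J<n * n. (kron (1\<^sub>m n) A + kron A (1\<^sub>m n)) $$ (I, J) * x I * x J)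
    = (\<Sum>p<n. \<Sum>i<n. \<Sum>j<n. A $$ (i, j) * x (p * n + i) * x (p * n + j))
    + (\<Sum>i<n. \<Sum>p<n. \<Sum>q<n. A $$ (p, q) * x (p * n + i) * x (q * n + i))"
proof -
  have "(\<Sum>I<n * n. \<Sum>J<n * n. (kron (1\<^sub>m n) A + kron A (1\<^sub>m n)) $$ (I, J) * x I * x J)
    = (\<Sum>p<n. \<Sum>i<n. \<Sum>q<n. \<Sum>j<n.
        ((if p = q then A $$ (i, j) else 0) + (if i = j then A $$ (p, q) else 0)) * x (p * n + i) * x (q * n + j))"
    by (simp add: sum_lessThan_mult_split kron_sum_index[OF A])
  also have "\<dots> = (\<Sum>p<n. \<Sum>i<n. (\<Sum>j<n. A $$ (i, j) * x (p * n + i) * x (p * n + j))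
      + (\<Sum>q<n. A $$ (p, q) * x (p * n + i) * x (q * n + i)))"
  proof (intro sum.cong refl)
    fix p i assume p: "p \<in> {..<n}" and i: "i \<in> {..<n}"
    have "(\<Sum>q<n. \<Sum>j<n. (if p = q then A $$ (i, j) else 0) * x (p * n + i) * x (q * n + j))
        = (\<Sum>q<n. if p = q then \<Sum>j<n. A $$ (i, j) * x (p * n + i) * x (p * n + j) else 0)"
      by (intro sum.cong refl) auto
    also have "\<dots> = (\<Sum>j<n. A $$ (i, j) * x (p * n + i) * x (p * n + j))"
      using p by simp
    finally have first: "(\<Sum>q<n. \<Sum>j<n. (if p = q then A $$ (i, j) else 0) * x (p * n + i) * x (q * n + j))
        = (\<Sum>j<n. A $$ (i, j) * x (p * n + i) * x (p * n + j))" .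
    have second: "(\<Sum>q<n. \<Sum>j<n. (if i = j then A $$ (p, q) else 0) * x (p * n + i) * x (q * n + j))
        = (\<Sum>q<n. A $$ (p, q) * x (p * n + i) * x (q * n + i))"
      using i by (intro sum.cong refl) (simp add: if_distrib[of "\<lambda>a. a * _"] cong: if_cong)
    show "(\<Sum>q<n. \<Sum>j<n. ((if p = q then A $$ (i, j) else 0) + (if i = j then A $$ (p, q) else 0))
          * x (p * n + i) * x (q * n + j))
        = (\<Sum>j<n. A $$ (i, j) * x (p * n + i) * x (p * n + j))
          + (\<Sum>q<n. A $$ (p, q) * x (p * n + i) * x (q * n + i))"
      unfolding first[symmetric] second[symmetric] by (simp add: distrib_right sum.distrib)
  qed
  also have "\<dots> = (\<Sum>p<n. \<Sum>i<n. \<Sum>j<n. A $$ (i, j) * x (p * n + i) * x (p * n + j))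
      + (\<Sum>i<n. \<Sum>p<n. \<Sum>q<n. A $$ (p, q) * x (p * n + i) * x (q * n + i))"
    by (simp add: sum.distrib sum.swap[of "\<lambda>p i. \<Sum>q<n. A $$ (p, q) * x (p * n + i) * x (q * n + i)"])
  finally show ?thesis .
qed

lemma eigenvector_quadratic_form:
  fixes B :: "real mat"
  assumes "B \<in> carrier_mat N N" "eigenvector B v ev"
  shows "(\<Sum>I<N. \<Sum>J<N. B $$ (I, J) * v $ I * v $ J) = ev * (\<Sum>I<N. (v $ I)\<^sup>2)"
proof -
  have v: "v \<in> carrier_vec N" "B *\<^sub>v v = ev \<cdot>\<^sub>v v"
    using assms unfolding eigenvector_def by auto
  have row: "(\<Sum>J<N. B $$ (I, J) * v $ J) = ev * v $ I" if "I < N" for I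
  proof -
    have "(B *\<^sub>v v) $ I = (\<Sum>J<N. B $$ (I, J) * v $ J)"
      using that assms(1) v(1) by (simp add: scalar_prod_def atLeast0LessThan)
    then show ?thesis using v(2) that v(1) by simp
  qed
  have "(\<Sum>I<N. \<Sum>J<N. B $$ (I, J) * v $ I * v $ J) = (\<Sum>I<N. v $ I * (\<Sum>J<N. B $$ (I, J) * v $ J))"
    by (simp add: sum_distrib_left algebra_simps)
  also have "\<dots> = (\<Sum>I<N. v $ I * (ev * v $ I))"
    using row by simp
  also have "\<dots> = ev * (\<Sum>I<N. (v $ I)\<^sup>2)"
    by (simp add: sum_distrib_left power2_eq_square algebra_simps)
  finally show ?thesis .
qed

lemma eigenvector_nonzero_index:
  fixes B :: "'a::comm_ring_1 mat" and v :: "'a vec"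
  assumes "B \<in> carrier_mat N N" "eigenvector B v ev"
  obtains I where "I < N" "v $ I \<noteq> 0"
proof -
  have v: "v \<in> carrier_vec N" "v \<noteq> 0\<^sub>v N"
    using assms unfolding eigenvector_def by auto
  show thesis
  proof (rule ccontr)
    assume "\<not> thesis"
    with that have "v = 0\<^sub>v N" using v(1) by (intro eq_vecI) auto
    with v(2) show False ..
  qed
qed

lemma eigenvector_nonzero_block:
  fixes B :: "'a::comm_ring_1 mat" and v :: "'a vec"
  assumes "B \<in> carrier_mat (n * n) (n * n)" "eigenvector B v ev"
  obtains p i where "p < n" "i < n" "v $ (p * n + i) \<noteq> 0"
proof -
  obtain I where I: "I < n * n" "v $ I \<noteq> 0"
    using eigenvector_nonzero_index[OF assms] by blast
  then have "0 < n" by (cases n) auto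
  with I show thesis
    using that[of "I div n" "I mod n"] by (simp add: less_mult_imp_div_less mult.commute)
qed

lemma eigenvector_kron_sum_split:
  fixes A :: "real mat"
  assumes A: "A \<in> carrier_mat n n" and v: "eigenvector (kron (1\<^sub>m n) A + kron A (1\<^sub>m n)) v ev"
  shows "ev * (\<Sum>p<n. \<Sum>i<n. (v $ (p * n + i))\<^sup>2)
    = (\<Sum>p<n. \<Sum>i<n. \<Sum>j<n. A $$ (i, j) * v $ (p * n + i) * v $ (p * n + j))
    + (\<Sum>i<n. \<Sum>p<n. \<Sum>q<n. A $$ (p, q) * v $ (p * n + i) * v $ (q * n + i))"
proof -
  have "kron (1\<^sub>m n) A + kron A (1\<^sub>m n) \<in> carrier_mat (n * n) (n * n)"
    using A unfolding kron_def by auto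
  from eigenvector_quadratic_form[OF this v] show ?thesis
    unfolding kron_sum_quadratic_form[OF A] by (simp add: sum_lessThan_mult_split)
qed

lemma eigenvalue_kron_sum_bounds:
  fixes A :: "real mat"
  assumes A: "A \<in> carrier_mat n n"
    and lower: "\<And>y. \<exists>i<n. y i \<noteq> 0 \<Longrightarrow>
      L * (\<Sum>i<n. (y i)\<^sup>2) < (\<Sum>i<n. \<Sum>j<n. A $$ (i, j) * y i * y j)"
    and upper: "\<And>y. \<exists>i<n. y i \<noteq> 0 \<Longrightarrow>
      (\<Sum>i<n. \<Sum>j<n. A $$ (i, j) * y i * y j) < U * (\<Sum>i<n. (y i)\<^sup>2)"
    and ev: "eigenvalue (kron (1\<^sub>m n) A + kron A (1\<^sub>m n)) ev"
  shows "2 * L < ev \<and> ev < 2 * U"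
proof -
  define Q where "Q y = (\<Sum>i<n. \<Sum>j<n. A $$ (i, j) * y i * y j)" for y
  define N where "N y = (\<Sum>i<n. (y i)\<^sup>2)" for y :: "nat \<Rightarrow> real"
  obtain v where v: "eigenvector (kron (1\<^sub>m n) A + kron A (1\<^sub>m n)) v ev"
    using ev unfolding eigenvalue_def by blast
  define y where "y p i = v $ (p * n + i)" for p i
  define S where "S = (\<Sum>p<n. N (y p))"
  have split: "ev * S = (\<Sum>p<n. Q (y p)) + (\<Sum>i<n. Q (\<lambda>p. y p i))"
    using eigenvector_kron_sum_split[OF A v] by (simp add: S_def N_def Q_def y_def)
  have weak: "L * N z \<le> Q z \<and> Q z \<le> U * N z" for z
  proof (cases "\<exists>i<n. z i \<noteq> 0")
    case True
    then show ?thesis using lower upper unfolding N_def Q_def by (simp add: less_imp_le)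
  qed (simp add: N_def Q_def)
  have "kron (1\<^sub>m n) A + kron A (1\<^sub>m n) \<in> carrier_mat (n * n) (n * n)"
    using A unfolding kron_def by auto
  then obtain p0 i0 where p0: "p0 < n" "i0 < n" "y p0 i0 \<noteq> 0"
    using eigenvector_nonzero_block v unfolding y_def by metis
  then have strict: "L * N (y p0) < Q (y p0) \<and> Q (y p0) < U * N (y p0)"
    using lower upper unfolding N_def Q_def by blast
  have "L * S < (\<Sum>p<n. Q (y p))" "(\<Sum>p<n. Q (y p)) < U * S"
    unfolding S_def sum_distrib_left using p0(1) strict weak by (auto intro!: sum_strict_mono_ex1)
  moreover have "L * S \<le> (\<Sum>i<n. Q (\<lambda>p. y p i))" "(\<Sum>i<n. Q (\<lambda>p. y p i)) \<le> U * S"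
  proof -
    have S_cols: "S = (\<Sum>i<n. N (\<lambda>p. y p i))" unfolding S_def N_def by (rule sum.swap)
    show "L * S \<le> (\<Sum>i<n. Q (\<lambda>p. y p i))" "(\<Sum>i<n. Q (\<lambda>p. y p i)) \<le> U * S"
      unfolding S_cols sum_distrib_left using weak by (auto intro!: sum_mono)
  qed
  moreover have "0 < S"
  proof -
    have "0 < N (y p0)" unfolding N_def using p0 by (intro sum_pos2[of _ i0]) auto
    also have "N (y p0) \<le> S"
      unfolding S_def using p0(1) by (intro member_le_sum) (auto simp: N_def intro: sum_nonneg)
    finally show ?thesis .
  qed
  ultimately show ?thesis
    using split mult_right_less_imp_less[of "2 * L" S ev] mult_right_less_imp_less[of ev S "2 * U"]
    by (auto simp: algebra_simps)
qed

lemma eigenvalue_tauT2_bounds: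
  assumes \<mu>: "0 < \<mu>" and \<alpha>: "0 < \<alpha>" "\<alpha> \<le> 2" and M: "2 \<le> M"
    and ev: "eigenvalue (tauT2 \<mu> \<alpha> M) ev"
  defines "P \<equiv> frac_tail \<alpha> (M - 1)"
  shows "4 * \<mu> * P < ev \<and> ev < 2 * \<mu> * (2 * frac_coeff \<alpha> 0 - frac_coeff \<alpha> 2 - 2 * P)"
proof -
  have scale: "(\<Sum>i<M. \<Sum>j<M. tauT1 \<mu> \<alpha> M $$ (i, j) * y i * y j)
      = \<mu> * (\<Sum>i<M. \<Sum>j<M. toeplitz_hankel \<alpha> M $$ (i, j) * y i * y j)" for y
    by (simp add: tauT1_index sum_distrib_left mult.assoc)
  have "2 * (\<mu> * (2 * P)) < ev \<and> ev < 2 * (\<mu> * (2 * frac_coeff \<alpha> 0 - frac_coeff \<alpha> 2 - 2 * P))"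
  proof (rule eigenvalue_kron_sum_bounds[OF tauT1_carrier])
    fix y :: "nat \<Rightarrow> real"
    assume nz: "\<exists>i<M. y i \<noteq> 0"
    show "\<mu> * (2 * P) * (\<Sum>i<M. (y i)\<^sup>2) < (\<Sum>i<M. \<Sum>j<M. tauT1 \<mu> \<alpha> M $$ (i, j) * y i * y j)"
      unfolding scale P_def using mult_strict_left_mono[OF toeplitz_hankel_form_bounds(1)[OF \<alpha> M nz] \<mu>]
      by (simp add: mult.assoc)
    show "(\<Sum>i<M. \<Sum>j<M. tauT1 \<mu> \<alpha> M $$ (i, j) * y i * y j)
        < \<mu> * (2 * frac_coeff \<alpha> 0 - frac_coeff \<alpha> 2 - 2 * P) * (\<Sum>i<M. (y i)\<^sup>2)"
      unfolding scale P_def using mult_strict_left_mono[OF toeplitz_hankel_form_bounds(2)[OF \<alpha> M nz] \<mu>]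
      by (simp add: mult.assoc)
  qed (use ev in \<open>simp add: tauT2_def\<close>)
  then show ?thesis by (simp add: algebra_simps)
qed

lemma eigenvalue_tauT2_theta_bounds:
  assumes \<mu>: "0 < \<mu>" and \<alpha>: "1 < \<alpha>" "\<alpha> \<le> 2" and M: "2 \<le> M"
    and ev: "eigenvalue (tauT2 \<mu> \<alpha> M) ev"
  defines "\<theta> \<equiv> theta_const \<alpha> / real (M + 1) powr \<alpha>"
  shows "4 * \<mu> * \<theta> < ev \<and> ev < 2 * \<mu> * (2 * frac_coeff \<alpha> 0 - frac_coeff \<alpha> 2 - 2 * \<theta>)"
proof -
  have "\<theta> \<le> frac_tail \<alpha> (M - 1)"
    unfolding \<theta>_def using \<alpha> M by (intro theta_const_le_frac_tail) auto
  then have "4 * \<mu> * \<theta> \<le> 4 * \<mu> * frac_tail \<alpha> (M - 1)" "\<mu> * \<theta> \<le> \<mu> * frac_tail \<alpha> (M - 1)"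
    using \<mu> by simp_all
  with eigenvalue_tauT2_bounds[OF \<mu> _ \<alpha>(2) M ev] \<alpha>(1) show ?thesis
    by (simp add: algebra_simps)
qed

theorem lemma5:
  fixes a b \<Delta>t \<alpha> :: real and M :: nat and ev :: real
  assumes "a < b" and "\<Delta>t > 0" and "M \<ge> 4" and "even M"
    and "1 < \<alpha>" and "\<alpha> \<le> 2"
    and "eigenvalue (tauT2 (\<Delta>t / ((b - a) / real (M + 1)) powr \<alpha>) \<alpha> M) ev"
  shows "4 * \<Delta>t * theta_const \<alpha> / (b - a) powr \<alpha> < ev
    \<and> ev < 4 * \<Delta>t / ((b - a) / real (M + 1)) powr \<alpha>
            * (Gamma (\<alpha> + 1) / (Gamma (\<alpha>/2 + 1))\<^sup>2
               - theta_const \<alpha> * ((b - a) / real (M + 1)) powr \<alpha> / (b - a) powr \<alpha>)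
          - 2 * frac_coeff \<alpha> 2 * \<Delta>t / ((b - a) / real (M + 1)) powr \<alpha>"
proof -
  define h where "h = (b - a) / real (M + 1)"
  define \<mu> where "\<mu> = \<Delta>t / h powr \<alpha>"
  define \<theta> where "\<theta> = theta_const \<alpha> / real (M + 1) powr \<alpha>"
  have pos: "0 < h powr \<alpha>" "0 < real (M + 1) powr \<alpha>" using assms(1) by (simp_all add: h_def)
  then have "0 < \<mu>" using assms(2) by (simp add: \<mu>_def)
  then have bounds:
      "4 * \<mu> * \<theta> < ev \<and> ev < 2 * \<mu> * (2 * frac_coeff \<alpha> 0 - frac_coeff \<alpha> 2 - 2 * \<theta>)"
    unfolding \<theta>_def using assms(3,5,6,7)
    by (intro eigenvalue_tauT2_theta_bounds) (simp_all add: \<mu>_def h_def)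
  have ba: "(b - a) powr \<alpha> = h powr \<alpha> * real (M + 1) powr \<alpha>"
    using assms(1) by (simp add: h_def powr_mult[symmetric])
  have "4 * \<Delta>t * theta_const \<alpha> / (b - a) powr \<alpha> = 4 * \<mu> * \<theta>"
    using pos unfolding ba \<mu>_def \<theta>_def by (simp add: field_simps)
  moreover have "4 * \<Delta>t / h powr \<alpha> * (Gamma (\<alpha> + 1) / (Gamma (\<alpha>/2 + 1))\<^sup>2
        - theta_const \<alpha> * h powr \<alpha> / (b - a) powr \<alpha>) - 2 * frac_coeff \<alpha> 2 * \<Delta>t / h powr \<alpha>
      = 2 * \<mu> * (2 * frac_coeff \<alpha> 0 - frac_coeff \<alpha> 2 - 2 * \<theta>)"
    using pos unfolding ba \<mu>_def \<theta>_def frac_coeff_0 by (simp add: field_simps)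
  ultimately show ?thesis
    using bounds unfolding h_def by simp
qed

end
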